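(* Let $A$ be a set and let $\mathcal{E}$ be a set of subsets of $A$ such that (C1) for every $K\subseteq A$, $K\in\mathcal{E}$ if and only if $A\setminus K\notin\mathcal{E}$; and (C2) if $K\in\mathcal{E}$ and $K\subseteq L\subseteq A$, then $L\in\mathcal{E}$. Suppose each member of $A$ chooses one of the six strict total orders on three candidates $a,b,c$, labelled by $\mathbb{Z}/6\mathbb{Z}$ as: $1: a>b>c$, $2: a>c>b$, $3: c>a>b$, $4: c>b>a$, $5: b>c>a$, $6: b>a>c$. For $p\in\mathbb{Z}/6\mathbb{Z}$ let $K(p)$ be the set of members who chose ranking $p$, $K(p,q)=K(p)\cup K(q)$ and $K(p,q,r)=K(p)\cup K(q)\cup K(r)$. If (T) there exists $p$ with $K(p,p+1)\in\mathcal{E}$, then (V) there exists $p$ such that both $K(p,p+1,p+2)\in\mathcal{E}$ and $K(p+1,p+2,p+3)\in\mathcal{E}$.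
   Context: Indices are taken modulo $6$. *)

theory Defs
  imports Main
begin

text \<open>Rankings are labelled by integers; label p stands for the residue class of p mod 6,
  with representatives 1..6 (1: a>b>c, 2: a>c>b, 3: c>a>b, 4: c>b>a, 5: b>c>a, 6: b>a>c).
  ch x is the label of the ranking chosen by member x.\<close>

definition Kp :: "'v set \<Rightarrow> ('v \<Rightarrow> int) \<Rightarrow> int \<Rightarrow> 'v set" where
  "Kp A ch p = {x \<in> A. ch x mod 6 = p mod 6}"

definition K2 :: "'v set \<Rightarrow> ('v \<Rightarrow> int) \<Rightarrow> int \<Rightarrow> int \<Rightarrow> 'v set" where
  "K2 A ch p q = Kp A ch p \<union> Kp A ch q"

definition K3 :: "'v set \<Rightarrow> ('v \<Rightarrow> int) \<Rightarrow> int \<Rightarrow> int \<Rightarrow> int \<Rightarrow> 'v set" where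
  "K3 A ch p q r = Kp A ch p \<union> Kp A ch q \<union> Kp A ch r"

end

theory Submission
  imports Defs
begin

(* K(p,p+1) lies in both K(p-1,p,p+1) and K(p,p+1,p+2), so monotonicity (C2) alone
   gives (V) with the index p-1. *)

lemma K3_subset: "K3 A ch p q r \<subseteq> A"
  by (auto simp: K3_def Kp_def)

lemma K2_subset_K3_right: "K2 A ch p q \<subseteq> K3 A ch p q r"
  by (auto simp: K2_def K3_def)

lemma K2_subset_K3_left: "K2 A ch p q \<subseteq> K3 A ch r p q"
  by (auto simp: K2_def K3_def)

theorem mainTheorem2:
  fixes A :: "'v set" and E :: "'v set set" and ch :: "'v \<Rightarrow> int"
  assumes E_sub: "E \<subseteq> Pow A"
    and C1: "\<And>K. K \<subseteq> A \<Longrightarrow> (K \<in> E \<longleftrightarrow> A - K \<notin> E)"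
    and C2: "\<And>K L. K \<in> E \<Longrightarrow> K \<subseteq> L \<Longrightarrow> L \<subseteq> A \<Longrightarrow> L \<in> E"
    and ch_range: "\<And>x. x \<in> A \<Longrightarrow> ch x \<in> {1..6}"
    and T: "\<exists>p. K2 A ch p (p + 1) \<in> E"
  shows "\<exists>p. K3 A ch p (p + 1) (p + 2) \<in> E \<and> K3 A ch (p + 1) (p + 2) (p + 3) \<in> E"
proof -
  obtain p where p: "K2 A ch p (p + 1) \<in> E" using T by blast
  have "K3 A ch (p - 1) p (p + 1) \<in> E"
    using C2[OF p K2_subset_K3_left K3_subset] .
  moreover have "K3 A ch p (p + 1) (p + 2) \<in> E"
    using C2[OF p K2_subset_K3_right K3_subset] .
  ultimately have "K3 A ch (p - 1) (p - 1 + 1) (p - 1 + 2) \<in> E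
      \<and> K3 A ch (p - 1 + 1) (p - 1 + 2) (p - 1 + 3) \<in> E"
    by (simp add: algebra_simps)
  then show ?thesis by blast
qed

end
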